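(* Let $T$ be a tournament with $n$ vertices and $t$ directed triangles, where $3t\geq n$. Then $$\alpha(T)\geq \frac{2}{3}\,n\sqrt{\frac{n}{3t}}.$$
   Context: A tournament is an orientation of a complete graph. A directed triangle is a directed cycle of length $3$. A subset $S\subseteq V(T)$ is acyclic if $T[S]$ contains no directed cycle; $\alpha(T)$ is the maximum size of an acyclic subset of $V(T)$. *)

theory Defs
  imports Main "HOL-Library.Disjoint_Sets" Complex_Main
begin

definition tournament :: "'a set \<Rightarrow> ('a \<Rightarrow> 'a \<Rightarrow> bool) \<Rightarrow> bool" where
  "tournament V E \<longleftrightarrow> finite V
     \<and> (\<forall>x y. E x y \<longrightarrow> x \<in> V \<and> y \<in> V)
     \<and> (\<forall>x\<in>V. \<not> E x x)
     \<and> (\<forall>x\<in>V. \<forall>y\<in>V. x \<noteq> y \<longrightarrow> (E x y \<longleftrightarrow> \<not> E y x))"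

definition directed_triangles :: "'a set \<Rightarrow> ('a \<Rightarrow> 'a \<Rightarrow> bool) \<Rightarrow> 'a set set" where
  "directed_triangles V E = {{x, y, z} | x y z.
      x \<in> V \<and> y \<in> V \<and> z \<in> V \<and> E x y \<and> E y z \<and> E z x}"

definition induced_arcs :: "('a \<Rightarrow> 'a \<Rightarrow> bool) \<Rightarrow> 'a set \<Rightarrow> ('a \<times> 'a) set" where
  "induced_arcs E S = {(x, y). x \<in> S \<and> y \<in> S \<and> E x y}"

definition acyclic_set :: "'a set \<Rightarrow> ('a \<Rightarrow> 'a \<Rightarrow> bool) \<Rightarrow> 'a set \<Rightarrow> bool" where
  "acyclic_set V E S \<longleftrightarrow> S \<subseteq> V \<and> acyclic (induced_arcs E S)"

definition alpha :: "'a set \<Rightarrow> ('a \<Rightarrow> 'a \<Rightarrow> bool) \<Rightarrow> nat" where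
  "alpha V E = Max (card ` {S. acyclic_set V E S})"

end

theory Submission
  imports Defs
begin

text \<open>Pick each vertex independently with probability p. A random set S then contains n p vertices
  and t p^3 directed triangles on average, so some S has at least n p - t p^3 more vertices than
  triangles. Deleting one vertex from each triangle inside S leaves a set without directed
  triangles, which in a tournament is transitive and hence acyclic; thus
  \<alpha>(T) \<ge> n p - t p^3. The choice p = sqrt (n / 3t) makes this 2/3 n p.\<close>

text \<open>The probability that the p-random subset of V is exactly S.\<close>
definition subset_weight :: "'a set \<Rightarrow> 'b::comm_ring_1 \<Rightarrow> 'a set \<Rightarrow> 'b" where
  "subset_weight V p S = p ^ card S * (1 - p) ^ card (V - S)"

lemma sum_subset_weight_supsets:
  fixes p :: "'b::comm_ring_1"
  assumes "finite V" "A \<subseteq> V"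
  shows "(\<Sum>S\<in>Pow V. if A \<subseteq> S then subset_weight V p S else 0) = p ^ card A"
proof -
  define q where "q = (\<lambda>v. if v \<in> A then 0 else 1 - p)"
  have "p ^ card A = (\<Prod>v\<in>V. if v \<in> A then p else 1)"
    using assms by (simp add: prod.If_cases Int_absorb1)
  also have "\<dots> = (\<Prod>v\<in>V. p + q v)"
    by (intro prod.cong) (auto simp: q_def)
  also have "\<dots> = (\<Sum>S\<in>Pow V. (\<Prod>v\<in>S. p) * (\<Prod>v\<in>V - S. q v))"
    by (rule prod_add[OF assms(1)])
  also have "\<dots> = (\<Sum>S\<in>Pow V. if A \<subseteq> S then subset_weight V p S else 0)"
  proof (rule sum.cong[OF refl])
    fix S assume "S \<in> Pow V"
    show "(\<Prod>v\<in>S. p) * (\<Prod>v\<in>V - S. q v) = (if A \<subseteq> S then subset_weight V p S else 0)"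
    proof (cases "A \<subseteq> S")
      case True
      then have "(\<Prod>v\<in>V - S. q v) = (\<Prod>v\<in>V - S. 1 - p)"
        by (intro prod.cong) (auto simp: q_def)
      then show ?thesis using True by (simp add: subset_weight_def)
    next
      case False
      then obtain a where "a \<in> A" "a \<notin> S" by auto
      then have "a \<in> V - S" "q a = 0" using assms(2) by (auto simp: q_def)
      then have "(\<Prod>v\<in>V - S. q v) = 0" using assms(1) by (meson finite_Diff prod_zero)
      then show ?thesis using False by simp
    qed
  qed
  finally show ?thesis by simp
qed

lemma sum_subset_weight_card_contained:
  fixes p :: "'b::comm_ring_1"
  assumes "finite V" "D \<subseteq> Pow V"
  shows "(\<Sum>S\<in>Pow V. subset_weight V p S * of_nat (card {X\<in>D. X \<subseteq> S})) = (\<Sum>X\<in>D. p ^ card X)"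
proof -
  have finD: "finite D" using assms finite_subset by blast
  have "(\<Sum>S\<in>Pow V. subset_weight V p S * of_nat (card {X\<in>D. X \<subseteq> S}))
      = (\<Sum>S\<in>Pow V. \<Sum>X\<in>D. if X \<subseteq> S then subset_weight V p S else 0)"
  proof (rule sum.cong[OF refl])
    fix S
    have "of_nat (card {X\<in>D. X \<subseteq> S}) = (\<Sum>X\<in>D. of_bool (X \<subseteq> S) :: 'b)"
      using finD by (simp add: Collect_conj_eq Int_commute)
    then show "subset_weight V p S * of_nat (card {X\<in>D. X \<subseteq> S})
        = (\<Sum>X\<in>D. if X \<subseteq> S then subset_weight V p S else 0)"
      by (auto simp: sum_distrib_left intro!: sum.cong)
  qed
  also have "\<dots> = (\<Sum>X\<in>D. \<Sum>S\<in>Pow V. if X \<subseteq> S then subset_weight V p S else 0)"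
    by (rule sum.swap)
  also have "\<dots> = (\<Sum>X\<in>D. p ^ card X)"
    using assms by (intro sum.cong refl sum_subset_weight_supsets) auto
  finally show ?thesis .
qed

lemma sum_subset_weight_card:
  fixes p :: "'b::comm_ring_1"
  assumes "finite V"
  shows "(\<Sum>S\<in>Pow V. subset_weight V p S * of_nat (card S)) = of_nat (card V) * p"
proof -
  let ?D = "(\<lambda>v. {v}) ` V"
  have "card {X\<in>?D. X \<subseteq> S} = card S" if "S \<subseteq> V" for S
  proof -
    have "{X\<in>?D. X \<subseteq> S} = (\<lambda>v. {v}) ` S" using that by auto
    then show ?thesis by (simp add: card_image)
  qed
  then have "(\<Sum>S\<in>Pow V. subset_weight V p S * of_nat (card S))
      = (\<Sum>S\<in>Pow V. subset_weight V p S * of_nat (card {X\<in>?D. X \<subseteq> S}))"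
    by (intro sum.cong) auto
  also have "\<dots> = (\<Sum>X\<in>?D. p ^ card X)"
    using assms by (intro sum_subset_weight_card_contained) auto
  also have "\<dots> = of_nat (card V) * p"
    by (simp add: sum.reindex)
  finally show ?thesis .
qed

lemma subset_weight_nonneg:
  fixes p :: real
  assumes "0 \<le> p" "p \<le> 1"
  shows "0 \<le> subset_weight V p S"
  using assms by (simp add: subset_weight_def)

lemma exists_ge_weighted_mean:
  fixes w f :: "'a \<Rightarrow> real"
  assumes "finite A" "\<And>x. x \<in> A \<Longrightarrow> 0 \<le> w x" "(\<Sum>x\<in>A. w x) = 1"
  shows "\<exists>x\<in>A. (\<Sum>y\<in>A. w y * f y) \<le> f x"
proof -
  have "A \<noteq> {}" using assms(3) by auto
  then have "Max (f ` A) \<in> f ` A" using assms(1) by simp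
  then obtain x where x: "x \<in> A" "f x = Max (f ` A)" by auto
  have max: "\<And>y. y \<in> A \<Longrightarrow> f y \<le> f x" using assms(1) x(2) by simp
  have "(\<Sum>y\<in>A. w y * f y) \<le> (\<Sum>y\<in>A. w y * f x)"
    using assms(2) max by (intro sum_mono mult_left_mono) auto
  also have "\<dots> = f x" using assms(3) by (simp flip: sum_distrib_right)
  finally show ?thesis using x(1) by blast
qed

lemma exists_subset_avoiding_contained:
  assumes "finite S" "finite D" "{} \<notin> D"
  shows "\<exists>S'\<subseteq>S. (\<forall>X\<in>D. \<not> X \<subseteq> S') \<and> card S - card {X\<in>D. X \<subseteq> S} \<le> card S'"
proof -
  define C where "C = {X\<in>D. X \<subseteq> S}"
  define S' where "S' = S - (\<lambda>X. SOME x. x \<in> X) ` C"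
  have "\<not> X \<subseteq> S'" if "X \<in> D" for X
  proof
    assume "X \<subseteq> S'"
    moreover have "X \<noteq> {}" using that assms(3) by auto
    then have "(SOME x. x \<in> X) \<in> X" by (meson ex_in_conv someI_ex)
    moreover have "X \<in> C" using that \<open>X \<subseteq> S'\<close> by (auto simp: C_def S'_def)
    ultimately show False by (auto simp: S'_def)
  qed
  moreover have "card S - card C \<le> card S'"
  proof -
    have "finite C" using assms(2) by (simp add: C_def)
    then have "card S - card ((\<lambda>X. SOME x. x \<in> X) ` C) \<le> card S'"
      unfolding S'_def by (intro diff_card_le_card_Diff) simp
    moreover have "card ((\<lambda>X. SOME x. x \<in> X) ` C) \<le> card C"
      using \<open>finite C\<close> by (rule card_image_le)
    ultimately show ?thesis by linarith
  qed
  ultimately show ?thesis unfolding C_def S'_def by blast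
qed

lemma directed_triangle_card:
  assumes "tournament V E" "X \<in> directed_triangles V E"
  shows "card X = 3"
proof -
  obtain x y z where X: "X = {x, y, z}" "x \<in> V" "y \<in> V" "z \<in> V" "E x y" "E y z" "E z x"
    using assms(2) unfolding directed_triangles_def by blast
  then have "x \<noteq> y" "y \<noteq> z" "z \<noteq> x" using assms(1) unfolding tournament_def by blast+
  then show ?thesis using X by simp
qed

lemma directed_triangles_subset_Pow: "directed_triangles V E \<subseteq> Pow V"
  unfolding directed_triangles_def by blast

lemma acyclic_set_if_no_directed_triangle:
  assumes T: "tournament V E" and SV: "S \<subseteq> V"
    and no_triangle: "\<forall>X\<in>directed_triangles V E. \<not> X \<subseteq> S"
  shows "acyclic_set V E S"
proof -
  let ?R = "induced_arcs E S"
  have irrefl: "\<And>x. \<not> E x x" using T unfolding tournament_def by blast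
  have "trans ?R"
  proof (rule transI)
    fix x y z assume "(x, y) \<in> ?R" "(y, z) \<in> ?R"
    then have xyz: "x \<in> S" "y \<in> S" "z \<in> S" "E x y" "E y z" by (auto simp: induced_arcs_def)
    have "E x z"
    proof (cases "x = z")
      case True
      have "x \<noteq> y" using irrefl xyz(4) by metis
      then have "\<not> E y x" using xyz(1,2,4) SV T unfolding tournament_def by blast
      then show ?thesis using xyz(5) True by simp
    next
      case False
      have "{x, y, z} \<notin> directed_triangles V E" using no_triangle xyz by auto
      then have "\<not> E z x" using xyz SV unfolding directed_triangles_def by blast
      then show ?thesis using False xyz T SV unfolding tournament_def by blast
    qed
    then show "(x, z) \<in> ?R" using xyz by (simp add: induced_arcs_def)
  qed
  then have "acyclic ?R"
    unfolding acyclic_def using irrefl by (auto simp: trancl_id induced_arcs_def)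
  then show ?thesis using SV by (simp add: acyclic_set_def)
qed

lemma card_le_alpha:
  assumes "tournament V E" "acyclic_set V E S"
  shows "card S \<le> alpha V E"
proof -
  have "{S. acyclic_set V E S} \<subseteq> Pow V" by (auto simp: acyclic_set_def)
  then have "finite {S. acyclic_set V E S}"
    using assms(1) unfolding tournament_def by (meson finite_Pow_iff finite_subset)
  then show ?thesis unfolding alpha_def using assms(2) by (intro Max_ge) auto
qed

lemma card_minus_contained_triangles_le_alpha:
  assumes T: "tournament V E" and SV: "S \<subseteq> V"
  shows "card S - card {X\<in>directed_triangles V E. X \<subseteq> S} \<le> alpha V E"
proof -
  have finV: "finite V" using T by (simp add: tournament_def)
  have "finite S" using finite_subset[OF SV finV] .
  moreover have "finite (directed_triangles V E)"
    using finite_subset[OF directed_triangles_subset_Pow] finV by simp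
  moreover have "{} \<notin> directed_triangles V E"
    using directed_triangle_card[OF T, of "{}"] by auto
  ultimately have "\<exists>S'\<subseteq>S. (\<forall>X\<in>directed_triangles V E. \<not> X \<subseteq> S')
      \<and> card S - card {X\<in>directed_triangles V E. X \<subseteq> S} \<le> card S'"
    by (rule exists_subset_avoiding_contained)
  then obtain S' where S'S: "S' \<subseteq> S"
      and avoid: "\<forall>X\<in>directed_triangles V E. \<not> X \<subseteq> S'"
      and card: "card S - card {X\<in>directed_triangles V E. X \<subseteq> S} \<le> card S'"
    by blast
  have "acyclic_set V E S'"
    using acyclic_set_if_no_directed_triangle[OF T subset_trans[OF S'S SV] avoid] .
  then show ?thesis using card card_le_alpha[OF T] by (meson le_trans)
qed

lemma alpha_ge_cubic_bound:
  assumes T: "tournament V E" and p: "0 \<le> p" "p \<le> 1"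
  shows "real (card V) * p - real (card (directed_triangles V E)) * p ^ 3 \<le> real (alpha V E)"
proof -
  let ?D = "directed_triangles V E"
  let ?w = "subset_weight V p"
  let ?f = "\<lambda>S. real (card S) - real (card {X\<in>?D. X \<subseteq> S})"
  have fin: "finite V" using T by (simp add: tournament_def)
  have "(\<Sum>S\<in>Pow V. ?w S * real (card {X\<in>?D. X \<subseteq> S})) = real (card ?D) * p ^ 3"
    using sum_subset_weight_card_contained[OF fin directed_triangles_subset_Pow, of p]
    by (simp add: directed_triangle_card[OF T])
  then have mean: "(\<Sum>S\<in>Pow V. ?w S * ?f S) = real (card V) * p - real (card ?D) * p ^ 3"
    using sum_subset_weight_card[OF fin, of p]
    by (simp add: right_diff_distrib sum_subtractf)
  have "(\<Sum>S\<in>Pow V. ?w S) = 1"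
    using sum_subset_weight_supsets[OF fin empty_subsetI, of p] by simp
  then obtain S where "S \<subseteq> V" "(\<Sum>S\<in>Pow V. ?w S * ?f S) \<le> ?f S"
    using exists_ge_weighted_mean[of "Pow V" ?w ?f] fin subset_weight_nonneg[OF p] by auto
  moreover have "?f S \<le> real (alpha V E)"
    using card_minus_contained_triangles_le_alpha[OF T \<open>S \<subseteq> V\<close>] by linarith
  ultimately show ?thesis using mean by linarith
qed

theorem mainTheorem4:
  fixes V :: "'a set" and E :: "'a \<Rightarrow> 'a \<Rightarrow> bool" and n t :: nat
  assumes "tournament V E"
    and "n = card V"
    and "t = card (directed_triangles V E)"
    and "3 * t \<ge> n"
  shows "real (alpha V E) \<ge> 2 / 3 * real n * sqrt (real n / (3 * real t))"
proof (cases "t = 0")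
  case True
  then show ?thesis using assms(4) by simp
next
  case False
  define p where "p = sqrt (real n / (3 * real t))"
  have "0 \<le> p" "p \<le> 1" using assms(4) False by (auto simp: p_def divide_le_eq_1)
  have "real t * p ^ 3 = real t * p\<^sup>2 * p" by (simp add: power3_eq_cube power2_eq_square)
  also have "\<dots> = real n / 3 * p" using False by (simp add: p_def)
  finally have "real n * p - real t * p ^ 3 = 2 / 3 * real n * p" by simp
  then show ?thesis
    using alpha_ge_cubic_bound[OF assms(1) \<open>0 \<le> p\<close> \<open>p \<le> 1\<close>] assms(2,3) by (simp add: p_def)
qed

end
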